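(* Let $\sigma: \Omega \to \Delta(A)$ be a canonical experiment. Then $\tau^{*} \in BR(\sigma)$ if and only if there exists $p \in P_r^{*}(\sigma)$ such that for all $a, b \in A$, $$\sum_{\omega \in \Omega} p(\omega)\sigma(a\mid\omega)\,[u_r(b,\omega) - u_r(a,\omega)] \le 0.$$
   Context: Setting: $\Omega$ is a finite set of states, $A$ a finite set of receiver actions, $u_r: A \times \Omega \to \mathbb{R}$ the receiver's payoff. $P \subseteq \Delta(\Omega)$ is a nonempty closed convex set of priors; the receiver has maxmin expected utility preferences. A canonical experiment is $\sigma: \Omega \to \Delta(A)$; a receiver strategy is $\tau: A \to \Delta(A)$. $u_r(p,\sigma,\tau) = \sum_{\omega,m,a} p(\omega)\sigma(m\mid\omega)\tau(a\mid m)u_r(a,\omega)$, $u_r(\sigma,\tau) = \min_{p \in P} u_r(p,\sigma,\tau)$, and $BR(\sigma) = \arg\max_{\tau} u_r(\sigma,\tau)$ over all $\tau: A \to \Delta(A)$. The obedient strategy $\tau^{*}$ is $\tau^{*}(a\mid a) = 1$ for all $a$. $P_r^{*}(\sigma) = \arg\min_{p \in P} u_r(p,\sigma,\tau^{*})$ is the set of worst-case priors under obedience. *)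

theory Defs
  imports "HOL-Analysis.Analysis"
begin

definition is_dist :: "('x::finite \<Rightarrow> real) \<Rightarrow> bool" where
  "is_dist q \<longleftrightarrow> (\<forall>x. 0 \<le> q x) \<and> (\<Sum>x\<in>UNIV. q x) = 1"

definition is_prior :: "real ^ 'w::finite \<Rightarrow> bool" where
  "is_prior p \<longleftrightarrow> is_dist (\<lambda>w. p $ w)"

text \<open>A (canonical) experiment sigma: Omega -> Delta(A), written sigma w a = sigma(a|w);
a receiver strategy tau: A -> Delta(A), written tau m a = tau(a|m).\<close>

definition is_experiment :: "('w::finite \<Rightarrow> 'a::finite \<Rightarrow> real) \<Rightarrow> bool" where
  "is_experiment \<sigma> \<longleftrightarrow> (\<forall>w. is_dist (\<sigma> w))"

definition is_strategy :: "('a::finite \<Rightarrow> 'a \<Rightarrow> real) \<Rightarrow> bool" where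
  "is_strategy \<tau> \<longleftrightarrow> (\<forall>m. is_dist (\<tau> m))"

definition ur_p :: "('a::finite \<Rightarrow> 'w::finite \<Rightarrow> real) \<Rightarrow> real ^ 'w \<Rightarrow>
    ('w \<Rightarrow> 'a \<Rightarrow> real) \<Rightarrow> ('a \<Rightarrow> 'a \<Rightarrow> real) \<Rightarrow> real" where
  "ur_p u p \<sigma> \<tau> = (\<Sum>w\<in>UNIV. \<Sum>m\<in>UNIV. \<Sum>a\<in>UNIV. p $ w * \<sigma> w m * \<tau> m a * u a w)"

text \<open>Maxmin utility: the minimum over the (compact) prior set P, expressed as an infimum.\<close>
definition ur :: "('a::finite \<Rightarrow> 'w::finite \<Rightarrow> real) \<Rightarrow> (real ^ 'w) set \<Rightarrow>
    ('w \<Rightarrow> 'a \<Rightarrow> real) \<Rightarrow> ('a \<Rightarrow> 'a \<Rightarrow> real) \<Rightarrow> real" where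
  "ur u P \<sigma> \<tau> = (INF p\<in>P. ur_p u p \<sigma> \<tau>)"

definition BR :: "('a::finite \<Rightarrow> 'w::finite \<Rightarrow> real) \<Rightarrow> (real ^ 'w) set \<Rightarrow>
    ('w \<Rightarrow> 'a \<Rightarrow> real) \<Rightarrow> ('a \<Rightarrow> 'a \<Rightarrow> real) set" where
  "BR u P \<sigma> = {\<tau>. is_strategy \<tau> \<and> (\<forall>\<tau>'. is_strategy \<tau>' \<longrightarrow> ur u P \<sigma> \<tau>' \<le> ur u P \<sigma> \<tau>)}"

definition obedient :: "'a \<Rightarrow> 'a \<Rightarrow> real" where
  "obedient m a = (if a = m then 1 else 0)"

definition worst_priors :: "('a::finite \<Rightarrow> 'w::finite \<Rightarrow> real) \<Rightarrow> (real ^ 'w) set \<Rightarrow>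
    ('w \<Rightarrow> 'a \<Rightarrow> real) \<Rightarrow> (real ^ 'w) set" where
  "worst_priors u P \<sigma> = {p \<in> P. \<forall>q\<in>P. ur_p u p \<sigma> obedient \<le> ur_p u q \<sigma> obedient}"

end

theory Submission
  imports Defs
begin

(* At a prior p, the payoff of a strategy tau is the obedient payoff plus the tau-weighted
   deviation gains D_p(a, b) = sum_w p(w) sigma(a|w) (u(b, w) - u(a, w)). If a worst-case
   prior p has no profitable deviation, every strategy earns at most the obedient payoff at p,
   which is the obedient maxmin value. Conversely, if every worst-case prior has a profitable
   deviation, separating the image of the compact convex set of worst-case priors under D from
   the nonpositive orthant yields one mixture theta of deviations that is profitable at all
   worst-case priors simultaneously. Switching from a to b with the small probability
   eps theta(a, b) then lifts the payoff at every prior strictly above the obedient maxmin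
   value, by compactness of P. *)

lemma is_dist_normalize:
  assumes "\<forall>i. 0 \<le> \<mu> i" and "0 < sum \<mu> UNIV"
  shows "is_dist (\<lambda>i. \<mu> i / sum \<mu> UNIV)"
  using assms unfolding is_dist_def by (simp add: sum_divide_distrib[symmetric])

lemma nonpos_orthant_separation:
  fixes a :: "real ^ 'i::finite"
  assumes "\<forall>x. (\<forall>i. x $ i \<le> 0) \<longrightarrow> b < a \<bullet> x"
  shows "b < 0" and "a $ i \<le> 0"
proof -
  show "b < 0" using assms[rule_format, of 0] by simp
  show "a $ i \<le> 0"
  proof (rule ccontr)
    assume "\<not> a $ i \<le> 0"
    then have "b / a $ i \<le> 0" and "a \<bullet> axis i (b / a $ i) = b"
      using \<open>b < 0\<close> by (simp_all add: divide_nonpos_pos inner_axis)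
    moreover from this have "\<forall>j. axis i (b / a $ i) $ j \<le> 0" by (simp add: axis_def)
    ultimately show False using assms by fastforce
  qed
qed

lemma nonneg_combination_pos_on_compact_convex:
  fixes W :: "'v::euclidean_space set" and f :: "'i::finite \<Rightarrow> 'v \<Rightarrow> real"
  assumes "compact W" and "convex W" and "W \<noteq> {}" and "\<And>i. linear (f i)"
    and some_pos: "\<And>p. p \<in> W \<Longrightarrow> \<exists>i. 0 < f i p"
  shows "\<exists>\<mu>. (\<forall>i. 0 \<le> \<mu> i) \<and> (\<forall>p\<in>W. 0 < (\<Sum>i\<in>UNIV. \<mu> i * f i p))"
proof -
  define F :: "'v \<Rightarrow> real ^ 'i" where "F p = (\<chi> i. f i p)" for p
  define N :: "(real ^ 'i) set" where "N = {x. \<forall>i. x $ i \<le> 0}"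
  have "linear F"
    using assms(4) unfolding F_def by (intro linearI) (simp_all add: vec_eq_iff linear_add linear_scale)
  then have "compact (F ` W)"
    using compact_continuous_image linear_continuous_on linear_conv_bounded_linear assms(1) by blast
  have "convex (F ` W)" by (rule convex_linear_image[OF \<open>linear F\<close> assms(2)])
  have N_halfspaces: "N = (\<Inter>i. {x. axis i 1 \<bullet> x \<le> 0})"
    unfolding N_def by (auto simp: inner_axis')
  have "closed N" unfolding N_halfspaces by (intro closed_INT ballI closed_halfspace_le)
  have "convex N" unfolding N_halfspaces by (intro convex_INT ballI convex_halfspace_le)
  have "F p \<notin> N" if "p \<in> W" for p
    using some_pos[OF that] unfolding F_def N_def by (auto simp: not_le)
  then have "F ` W \<inter> N = {}" by blast
  then obtain a b where sep_W: "\<forall>x\<in>F ` W. a \<bullet> x < b" and sep_N: "\<forall>x\<in>N. b < a \<bullet> x"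
    using separating_hyperplane_compact_closed[OF \<open>convex (F ` W)\<close> \<open>compact (F ` W)\<close> _
        \<open>convex N\<close> \<open>closed N\<close>] assms(3) by blast
  have "b < 0" and a_nonpos: "\<And>i. a $ i \<le> 0"
    using nonpos_orthant_separation sep_N unfolding N_def by blast+
  have "0 < (\<Sum>i\<in>UNIV. - a $ i * f i p)" if "p \<in> W" for p
  proof -
    have "(\<Sum>i\<in>UNIV. - a $ i * f i p) = - (a \<bullet> F p)"
      unfolding F_def inner_vec_def by (simp add: sum_negf)
    moreover have "a \<bullet> F p < b" using sep_W that by blast
    ultimately show ?thesis using \<open>b < 0\<close> by linarith
  qed
  then show ?thesis using a_nonpos by (intro exI[of _ "\<lambda>i. - a $ i"]) simp
qed

lemma positive_mixture_on_compact_convex: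
  fixes W :: "'v::euclidean_space set" and f :: "'i::finite \<Rightarrow> 'v \<Rightarrow> real"
  assumes "compact W" and "convex W" and "W \<noteq> {}" and "\<And>i. linear (f i)"
    and "\<And>p. p \<in> W \<Longrightarrow> \<exists>i. 0 < f i p"
  shows "\<exists>\<theta>. is_dist \<theta> \<and> (\<forall>p\<in>W. 0 < (\<Sum>i\<in>UNIV. \<theta> i * f i p))"
proof -
  obtain \<mu> where \<mu>_nonneg: "\<forall>i. 0 \<le> \<mu> i" and \<mu>_pos: "\<forall>p\<in>W. 0 < (\<Sum>i\<in>UNIV. \<mu> i * f i p)"
    using nonneg_combination_pos_on_compact_convex[OF assms] by blast
  have "0 < sum \<mu> UNIV"
  proof (rule ccontr)
    assume "\<not> 0 < sum \<mu> UNIV"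
    then have "\<forall>i. \<mu> i = 0"
      using \<mu>_nonneg sum_nonneg_eq_0_iff[of UNIV \<mu>] sum_nonneg[of UNIV \<mu>] by simp
    moreover obtain p where "p \<in> W" using assms(3) by blast
    ultimately show False using \<mu>_pos by fastforce
  qed
  define \<theta> where "\<theta> i = \<mu> i / sum \<mu> UNIV" for i
  have "0 < (\<Sum>i\<in>UNIV. \<theta> i * f i p)" if "p \<in> W" for p
  proof -
    have "(\<Sum>i\<in>UNIV. \<theta> i * f i p) = (\<Sum>i\<in>UNIV. \<mu> i * f i p) / sum \<mu> UNIV"
      unfolding \<theta>_def sum_divide_distrib by simp
    then show ?thesis using \<mu>_pos that \<open>0 < sum \<mu> UNIV\<close> by simp
  qed
  moreover have "is_dist \<theta>"
    unfolding \<theta>_def by (rule is_dist_normalize[OF \<mu>_nonneg \<open>0 < sum \<mu> UNIV\<close>])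
  ultimately show ?thesis by blast
qed

lemma small_perturbation_above_min:
  fixes g L :: "'v::metric_space \<Rightarrow> real"
  assumes "compact P" and "continuous_on P g" and "continuous_on P L"
    and above: "\<And>p. p \<in> P \<Longrightarrow> c \<le> g p"
    and pos_at_min: "\<And>p. p \<in> P \<Longrightarrow> g p \<le> c \<Longrightarrow> 0 < L p"
    and "0 < \<delta>"
  shows "\<exists>\<epsilon>>0. \<epsilon> \<le> \<delta> \<and> (\<forall>p\<in>P. c < g p + \<epsilon> * L p)"
proof -
  define S where "S = P \<inter> L -` {..0}"
  have "closed S"
    unfolding S_def
    by (intro continuous_closed_preimage assms(3) compact_imp_closed assms(1) closed_atMost)
  then have "compact S"
    using compact_Int_closed[OF assms(1)] unfolding S_def by (metis Int_assoc Int_absorb)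
  (* Where L may be nonpositive, g keeps a uniform gap above c that absorbs eps * L. *)
  obtain \<eta> where "0 < \<eta>" and gap: "\<forall>p\<in>S. c + \<eta> \<le> g p"
  proof (cases "S = {}")
    case False
    obtain p1 where "p1 \<in> S" and p1_min: "\<forall>p\<in>S. g p1 \<le> g p"
      using continuous_attains_inf[OF \<open>compact S\<close> False] continuous_on_subset[OF assms(2)]
      unfolding S_def by blast
    then have "c < g p1"
      using above pos_at_min unfolding S_def by (meson IntD1 IntD2 atMost_iff linorder_not_le vimageE)
    then show ?thesis using that[of "g p1 - c"] p1_min by simp
  qed (use that[of 1] in simp)
  obtain M where "0 < M" and M: "\<forall>p\<in>P. \<bar>L p\<bar> \<le> M"
    using compact_imp_bounded[OF compact_continuous_image[OF assms(3,1)]]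
    unfolding bounded_pos by auto
  define \<epsilon> where "\<epsilon> = min \<delta> (\<eta> / (2 * M))"
  have "0 < \<epsilon>" using \<open>0 < \<delta>\<close> \<open>0 < \<eta>\<close> \<open>0 < M\<close> by (simp add: \<epsilon>_def)
  have "\<epsilon> * M \<le> \<eta> / 2"
    using \<open>0 < M\<close> mult_right_mono[of \<epsilon> "\<eta> / (2 * M)" M] by (simp add: \<epsilon>_def)
  have "c < g p + \<epsilon> * L p" if "p \<in> P" for p
  proof (cases "L p \<le> 0")
    case True
    then have "c + \<eta> \<le> g p" using gap that unfolding S_def by simp
    moreover have "- (\<epsilon> * M) \<le> \<epsilon> * L p"
      using M that \<open>0 < \<epsilon>\<close> mult_left_mono[of "- M" "L p" \<epsilon>] by fastforce
    ultimately show ?thesis using \<open>\<epsilon> * M \<le> \<eta> / 2\<close> \<open>0 < \<eta>\<close> by linarith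
  next
    case False
    then show ?thesis using above[OF that] mult_pos_pos[OF \<open>0 < \<epsilon>\<close>, of "L p"] by simp
  qed
  moreover have "\<epsilon> \<le> \<delta>" by (simp add: \<epsilon>_def)
  ultimately show ?thesis using \<open>0 < \<epsilon>\<close> by blast
qed

definition deviation_gain :: "('a::finite \<Rightarrow> 'w::finite \<Rightarrow> real) \<Rightarrow> ('w \<Rightarrow> 'a \<Rightarrow> real) \<Rightarrow>
    real ^ 'w \<Rightarrow> 'a \<Rightarrow> 'a \<Rightarrow> real" where
  "deviation_gain u \<sigma> p a b = (\<Sum>w\<in>UNIV. p $ w * \<sigma> w a * (u b w - u a w))"

lemma deviation_gain_self [simp]: "deviation_gain u \<sigma> p a a = 0"
  by (simp add: deviation_gain_def)

lemma linear_deviation_gain: "linear (\<lambda>p. deviation_gain u \<sigma> p a b)"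
  by (rule linearI) (simp_all add: deviation_gain_def sum.distrib[symmetric] sum_distrib_left algebra_simps)

lemma continuous_on_deviation_gain: "continuous_on S (\<lambda>p. deviation_gain u \<sigma> p a b)"
  using linear_continuous_on linear_conv_bounded_linear linear_deviation_gain by blast

lemma linear_ur_p: "linear (\<lambda>p. ur_p u p \<sigma> \<tau>)"
  by (rule linearI) (simp_all add: ur_p_def sum.distrib[symmetric] sum_distrib_left algebra_simps)

lemma bounded_linear_ur_p: "bounded_linear (\<lambda>p. ur_p u p \<sigma> \<tau>)"
  using linear_conv_bounded_linear linear_ur_p by blast

lemma continuous_on_ur_p: "continuous_on S (\<lambda>p. ur_p u p \<sigma> \<tau>)"
  by (intro linear_continuous_on bounded_linear_ur_p)

lemma ur_p_eq_sum_actions: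
  "ur_p u p \<sigma> \<tau> = (\<Sum>m\<in>UNIV. \<Sum>w\<in>UNIV. p $ w * \<sigma> w m * (\<Sum>a\<in>UNIV. \<tau> m a * u a w))"
  unfolding ur_p_def sum_distrib_left by (subst sum.swap) (simp add: mult.assoc)

lemma sum_obedient: "(\<Sum>a\<in>UNIV. obedient m a * f a) = (f (m :: 'a::finite) :: real)"
  unfolding obedient_def by (simp add: if_distrib[of "\<lambda>x. x * f _"] cong: if_cong)

lemma ur_p_eq_obedient_plus_deviation_gains:
  assumes "\<And>m. sum (\<tau> m) UNIV = 1"
  shows "ur_p u p \<sigma> \<tau> = ur_p u p \<sigma> obedient
    + (\<Sum>m\<in>UNIV. \<Sum>b\<in>UNIV. \<tau> m b * deviation_gain u \<sigma> p m b)"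
proof -
  have row: "(\<Sum>b\<in>UNIV. \<tau> m b * u b w) = u m w + (\<Sum>b\<in>UNIV. \<tau> m b * (u b w - u m w))" for m w
    using assms[of m] by (simp add: right_diff_distrib sum_subtractf flip: sum_distrib_right)
  have "(\<Sum>m\<in>UNIV. \<Sum>b\<in>UNIV. \<tau> m b * deviation_gain u \<sigma> p m b)
      = (\<Sum>m\<in>UNIV. \<Sum>w\<in>UNIV. p $ w * \<sigma> w m * (\<Sum>b\<in>UNIV. \<tau> m b * (u b w - u m w)))"
    unfolding deviation_gain_def sum_distrib_left by (intro sum.cong refl, subst sum.swap) (simp add: mult_ac)
  then show ?thesis
    unfolding ur_p_eq_sum_actions row by (simp add: distrib_left sum.distrib sum_obedient)
qed

lemma compact_prior_set:
  assumes "closed P" and "\<forall>p\<in>P. is_prior p"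
  shows "compact (P :: (real ^ 'w::finite) set)"
proof -
  have "p \<in> cbox 0 1" if "p \<in> P" for p
  proof -
    have nonneg: "\<forall>w. 0 \<le> p $ w" and total: "(\<Sum>w\<in>UNIV. p $ w) = 1"
      using assms(2) that unfolding is_prior_def is_dist_def by auto
    have "p $ w \<le> 1" for w
      using member_le_sum[of w UNIV "\<lambda>w. p $ w"] nonneg total by simp
    then show ?thesis using nonneg by (simp add: mem_box_cart)
  qed
  then have "P = P \<inter> cbox 0 1" by blast
  then show ?thesis using assms(1) by (metis closed_Int_compact compact_cbox)
qed

lemma ur_eq_ur_p_of_minimal:
  assumes "p \<in> P" and "\<forall>q\<in>P. ur_p u p \<sigma> \<tau> \<le> ur_p u q \<sigma> \<tau>"
  shows "ur u P \<sigma> \<tau> = ur_p u p \<sigma> \<tau>"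
  unfolding ur_def by (rule cInf_eq_minimum) (use assms in auto)

lemma exists_minimal_prior:
  assumes "compact P" and "P \<noteq> {}"
  shows "\<exists>p\<in>P. \<forall>q\<in>P. ur_p u p \<sigma> \<tau> \<le> ur_p u q \<sigma> \<tau>"
  using continuous_attains_inf[OF assms continuous_on_ur_p] .

lemma ur_le_ur_p:
  assumes "compact P" and "q \<in> P"
  shows "ur u P \<sigma> \<tau> \<le> ur_p u q \<sigma> \<tau>"
proof -
  obtain p where "p \<in> P" "\<forall>q\<in>P. ur_p u p \<sigma> \<tau> \<le> ur_p u q \<sigma> \<tau>"
    using exists_minimal_prior[OF assms(1)] assms(2) by blast
  then show ?thesis using ur_eq_ur_p_of_minimal assms(2) by metis
qed

lemma worst_priors_nonempty:
  assumes "compact P" and "P \<noteq> {}"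
  shows "worst_priors u P \<sigma> \<noteq> {}"
  using exists_minimal_prior[OF assms] unfolding worst_priors_def by blast

lemma worst_priors_eq_sublevel:
  assumes "compact P"
  shows "worst_priors u P \<sigma> = {p \<in> P. ur_p u p \<sigma> obedient \<le> ur u P \<sigma> obedient}"
proof (intro set_eqI iffI)
  fix p assume "p \<in> worst_priors u P \<sigma>"
  then have "p \<in> P" and "ur u P \<sigma> obedient = ur_p u p \<sigma> obedient"
    using ur_eq_ur_p_of_minimal unfolding worst_priors_def by auto
  then show "p \<in> {p \<in> P. ur_p u p \<sigma> obedient \<le> ur u P \<sigma> obedient}" by simp
next
  fix p assume "p \<in> {p \<in> P. ur_p u p \<sigma> obedient \<le> ur u P \<sigma> obedient}"
  then show "p \<in> worst_priors u P \<sigma>"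
    using ur_le_ur_p[OF assms] order_trans unfolding worst_priors_def by blast
qed

lemma compact_convex_worst_priors:
  assumes "compact P" and "convex P"
  shows "compact (worst_priors u P \<sigma>)" and "convex (worst_priors u P \<sigma>)"
proof -
  have sublevel: "worst_priors u P \<sigma> = P \<inter> (\<lambda>p. ur_p u p \<sigma> obedient) -` {..ur u P \<sigma> obedient}"
    using worst_priors_eq_sublevel[OF assms(1)] by auto
  show "compact (worst_priors u P \<sigma>)"
    unfolding sublevel
    by (intro compact_Int_closed assms(1) continuous_closed_vimage closed_atMost linear_continuous_at bounded_linear_ur_p)
  show "convex (worst_priors u P \<sigma>)"
    unfolding sublevel by (intro convex_Int assms(2) convex_linear_vimage linear_ur_p convex_real_interval)
qed

lemma is_strategy_obedient: "is_strategy (obedient :: 'a::finite \<Rightarrow> 'a \<Rightarrow> real)"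
  unfolding is_strategy_def is_dist_def obedient_def by simp

lemma obedient_in_BR_if_no_profitable_deviation:
  assumes "compact P" and p: "p \<in> worst_priors u P \<sigma>"
    and no_gain: "\<forall>a b. deviation_gain u \<sigma> p a b \<le> 0"
  shows "obedient \<in> BR u P \<sigma>"
proof -
  have "p \<in> P" and p_min: "\<forall>q\<in>P. ur_p u p \<sigma> obedient \<le> ur_p u q \<sigma> obedient"
    using p unfolding worst_priors_def by auto
  have "ur u P \<sigma> \<tau> \<le> ur u P \<sigma> obedient" if "is_strategy \<tau>" for \<tau>
  proof -
    have rows: "\<And>m. sum (\<tau> m) UNIV = 1" and nonneg: "\<And>m b. 0 \<le> \<tau> m b"
      using that unfolding is_strategy_def is_dist_def by auto
    have "ur u P \<sigma> \<tau> \<le> ur_p u p \<sigma> \<tau>"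
      by (rule ur_le_ur_p[OF assms(1) \<open>p \<in> P\<close>])
    also have "\<dots> = ur_p u p \<sigma> obedient
        + (\<Sum>m\<in>UNIV. \<Sum>b\<in>UNIV. \<tau> m b * deviation_gain u \<sigma> p m b)"
      by (rule ur_p_eq_obedient_plus_deviation_gains[OF rows])
    also have "\<dots> \<le> ur_p u p \<sigma> obedient"
      using sum_nonpos[OF sum_nonpos[OF mult_nonneg_nonpos[OF nonneg no_gain[rule_format]]]]
      by simp
    also have "\<dots> = ur u P \<sigma> obedient"
      by (rule ur_eq_ur_p_of_minimal[OF \<open>p \<in> P\<close> p_min, symmetric])
    finally show ?thesis .
  qed
  then show ?thesis unfolding BR_def using is_strategy_obedient by blast
qed

(* On recommendation m the receiver switches to b with probability eps * theta (m, b) and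
   obeys otherwise. *)
definition obedient_perturbation :: "real \<Rightarrow> ('a::finite \<times> 'a \<Rightarrow> real) \<Rightarrow> 'a \<Rightarrow> 'a \<Rightarrow> real" where
  "obedient_perturbation \<epsilon> \<theta> m b =
     obedient m b + \<epsilon> * (\<theta> (m, b) - (if b = m then \<Sum>c\<in>UNIV. \<theta> (m, c) else 0))"

lemma sum_obedient_perturbation: "sum (obedient_perturbation \<epsilon> \<theta> m) UNIV = 1"
  by (simp add: obedient_perturbation_def obedient_def sum.distrib sum_subtractf
      flip: sum_distrib_left)

lemma is_strategy_obedient_perturbation:
  assumes "is_dist \<theta>" and "0 \<le> \<epsilon>" and "\<epsilon> \<le> 1"
  shows "is_strategy (obedient_perturbation \<epsilon> \<theta>)"
proof -
  have "0 \<le> obedient_perturbation \<epsilon> \<theta> m b" for m b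
  proof (cases "b = m")
    case True
    have "(\<Sum>c\<in>UNIV. \<theta> (m, c)) = sum \<theta> (Pair m ` UNIV)"
      by (simp add: sum.reindex inj_on_def)
    also have "\<dots> \<le> sum \<theta> UNIV"
      by (rule sum_mono2) (use assms(1) in \<open>auto simp: is_dist_def\<close>)
    also have "\<dots> = 1" using assms(1) unfolding is_dist_def by simp
    finally have "\<epsilon> * (\<Sum>c\<in>UNIV. \<theta> (m, c)) \<le> \<epsilon>"
      using mult_left_mono[OF _ assms(2)] by fastforce
    moreover have "0 \<le> \<epsilon> * \<theta> (m, m)" using assms unfolding is_dist_def by simp
    ultimately show ?thesis
      using True assms(3) unfolding obedient_perturbation_def obedient_def by (simp add: algebra_simps)
  next
    case False
    then show ?thesis
      using assms unfolding obedient_perturbation_def obedient_def is_dist_def by simp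
  qed
  then show ?thesis
    unfolding is_strategy_def is_dist_def using sum_obedient_perturbation by blast
qed

lemma ur_p_obedient_perturbation:
  "ur_p u p \<sigma> (obedient_perturbation \<epsilon> \<theta>) = ur_p u p \<sigma> obedient
     + \<epsilon> * (\<Sum>i\<in>UNIV. \<theta> i * deviation_gain u \<sigma> p (fst i) (snd i))"
proof -
  have termwise: "obedient_perturbation \<epsilon> \<theta> m b * deviation_gain u \<sigma> p m b
      = \<epsilon> * (\<theta> (m, b) * deviation_gain u \<sigma> p m b)" for m b
    by (cases "b = m") (simp_all add: obedient_perturbation_def obedient_def)
  have "(\<Sum>m\<in>UNIV. \<Sum>b\<in>UNIV. obedient_perturbation \<epsilon> \<theta> m b * deviation_gain u \<sigma> p m b)
      = \<epsilon> * (\<Sum>m\<in>UNIV. \<Sum>b\<in>UNIV. \<theta> (m, b) * deviation_gain u \<sigma> p m b)"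
    by (simp only: termwise sum_distrib_left)
  also have "\<dots> = \<epsilon> * (\<Sum>i\<in>UNIV. \<theta> i * deviation_gain u \<sigma> p (fst i) (snd i))"
    by (simp add: sum.cartesian_product case_prod_beta flip: UNIV_Times_UNIV)
  finally show ?thesis
    by (simp add: ur_p_eq_obedient_plus_deviation_gains[OF sum_obedient_perturbation])
qed

lemma no_profitable_deviation_if_obedient_in_BR:
  assumes "compact P" and "convex P" and "P \<noteq> {}" and BR: "obedient \<in> BR u P \<sigma>"
  shows "\<exists>p\<in>worst_priors u P \<sigma>. \<forall>a b. deviation_gain u \<sigma> p a b \<le> 0"
proof (rule ccontr)
  define g where "g p = ur_p u p \<sigma> obedient" for p
  define V where "V = ur u P \<sigma> obedient"
  assume "\<not> ?thesis"
  then have "\<exists>i. 0 < deviation_gain u \<sigma> p (fst i) (snd i)" if "p \<in> worst_priors u P \<sigma>" for p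
    using that by (metis fst_conv snd_conv not_le)
  then obtain \<theta> where "is_dist \<theta>"
    and gain_pos: "\<forall>p\<in>worst_priors u P \<sigma>. 0 < (\<Sum>i\<in>UNIV. \<theta> i * deviation_gain u \<sigma> p (fst i) (snd i))"
    using positive_mixture_on_compact_convex[where f="\<lambda>i p. deviation_gain u \<sigma> p (fst i) (snd i)",
        OF compact_convex_worst_priors[OF assms(1,2)] worst_priors_nonempty[OF assms(1,3)]
        linear_deviation_gain]
    by blast
  define L where "L p = (\<Sum>i\<in>UNIV. \<theta> i * deviation_gain u \<sigma> p (fst i) (snd i))" for p
  have "\<exists>\<epsilon>>0. \<epsilon> \<le> 1 \<and> (\<forall>p\<in>P. V < g p + \<epsilon> * L p)"
  proof (rule small_perturbation_above_min[OF assms(1)])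
    show "continuous_on P g" unfolding g_def by (rule continuous_on_ur_p)
    show "continuous_on P L" unfolding L_def by (intro continuous_intros continuous_on_deviation_gain)
    show "V \<le> g p" if "p \<in> P" for p
      unfolding V_def g_def by (rule ur_le_ur_p[OF assms(1) that])
    show "0 < L p" if "p \<in> P" and "g p \<le> V" for p
    proof -
      have "p \<in> worst_priors u P \<sigma>"
        unfolding worst_priors_eq_sublevel[OF assms(1)] using that by (simp add: g_def V_def)
      then show ?thesis using gain_pos unfolding L_def by blast
    qed
  qed simp
  then obtain \<epsilon> where "0 < \<epsilon>" "\<epsilon> \<le> 1" and above_V: "\<forall>p\<in>P. V < g p + \<epsilon> * L p" by blast
  define \<tau> where "\<tau> = obedient_perturbation \<epsilon> \<theta>"
  obtain q where "q \<in> P" and q_min: "\<forall>p\<in>P. ur_p u q \<sigma> \<tau> \<le> ur_p u p \<sigma> \<tau>"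
    using exists_minimal_prior[OF assms(1,3)] by blast
  have "V < g q + \<epsilon> * L q" using above_V \<open>q \<in> P\<close> by blast
  also have "\<dots> = ur_p u q \<sigma> \<tau>"
    by (simp add: \<tau>_def g_def L_def ur_p_obedient_perturbation)
  also have "\<dots> = ur u P \<sigma> \<tau>"
    by (rule ur_eq_ur_p_of_minimal[OF \<open>q \<in> P\<close> q_min, symmetric])
  also have "\<dots> \<le> V"
    using BR is_strategy_obedient_perturbation[OF \<open>is_dist \<theta>\<close>] \<open>0 < \<epsilon>\<close> \<open>\<epsilon> \<le> 1\<close>
    unfolding BR_def V_def \<tau>_def by simp
  finally show False by simp
qed

theorem mainTheorem5:
  fixes u :: "'a::finite \<Rightarrow> 'w::finite \<Rightarrow> real"
    and P :: "(real ^ 'w) set"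
    and \<sigma> :: "'w \<Rightarrow> 'a \<Rightarrow> real"
  assumes "P \<noteq> {}" and "closed P" and "convex P" and "\<forall>p\<in>P. is_prior p"
    and "is_experiment \<sigma>"
  shows "obedient \<in> BR u P \<sigma> \<longleftrightarrow>
    (\<exists>p\<in>worst_priors u P \<sigma>. \<forall>a b.
       (\<Sum>w\<in>UNIV. p $ w * \<sigma> w a * (u b w - u a w)) \<le> 0)"
  unfolding deviation_gain_def[symmetric]
proof
  have "compact P" using compact_prior_set assms(2,4) by blast
  show "\<exists>p\<in>worst_priors u P \<sigma>. \<forall>a b. deviation_gain u \<sigma> p a b \<le> 0"
    if "obedient \<in> BR u P \<sigma>"
    using no_profitable_deviation_if_obedient_in_BR[OF \<open>compact P\<close> assms(3,1) that] .
  show "obedient \<in> BR u P \<sigma>"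
    if "\<exists>p\<in>worst_priors u P \<sigma>. \<forall>a b. deviation_gain u \<sigma> p a b \<le> 0"
    using obedient_in_BR_if_no_profitable_deviation[OF \<open>compact P\<close>] that by blast
qed

end
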